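(* Let $X$ be a set, $\Omega$ a class of double sequences in $X$ with associated limits satisfying conditions (i)–(iv) below, and let $\tau$ be the resulting convergence topology on $X$. Let $\Sigma$ be the collection of all double sequences in $X$ that converge in Pringsheim's sense with respect to $\tau$. Then $\Omega\subseteq\Sigma$; more precisely, if $x\in\Omega$ has limit $l$, then $x$ converges in Pringsheim's sense to $l$ in $(X,\tau)$. Conditions: (i) for every $p\in X$, the constant double sequence $x_{ij}=p$ belongs to $\Omega$ and has limit $p$; (ii) if $x\in\Omega$ has limit $l$ and $z$ is obtained from $x$ by addition of finitely many terms, then $z\in\Omega$ has limit $l$; (iii) if $A,B$ are nonempty disjoint subsets of $X$ and $x\in\Omega$ has all terms in $A\cup B$ and limit $p$, then there is $y\in\Omega$ with limit $p$, range contained in the range of $x$, and terms all in $A$ or all in $B$; (iv) if $x=\{x_{ij}\}\in\Omega$ has limit $p$ and $\{x_n\}$ is a sequence with $x_n=x_{i_nj_n}$ for some $i_n>n$, $j_n>n$, then $y_{ij}=x_i$ ($i,j\in\mathbb{N}$) belongs to $\Omega$ and has limit $p$.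
   Context: Addition of one term to a double sequence $\{x_{ij}\}$: given $y\in X$ and $m,n\in\mathbb{N}$, either insert $y$ into row $m$ right after position $n$ (shifting the later entries of row $m$ one place to the right, other rows unchanged) or into column $n$ right after position $m$ (shifting later entries of column $n$ one place down, other columns unchanged); addition of finitely many terms is the successive application of such single insertions. The convergence topology $\tau$ on $X$ determined by $\Omega$: $G\subseteq X$ is open iff no member of $\Omega$ all of whose terms lie in $X\setminus G$ has a limit in $G$ (this is a topology). A double sequence $\{x_{ij}\}$ converges in Pringsheim's sense to $\xi$ in $(X,\tau)$ if for every open $U\ni\xi$ there is $k$ with $x_{ij}\in U$ for all $i>k$, $j>k$. *)

theory Defs
  imports Main
begin

(* The set X is modelled as the type 'a.  The class \<Omega> of double sequences with associated limits
   is a relation: \<Omega> x l means "x belongs to \<Omega> and has limit l". *)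

type_synonym 'a dseq = "nat \<Rightarrow> nat \<Rightarrow> 'a"

definition insert_row :: "'a dseq \<Rightarrow> 'a \<Rightarrow> nat \<Rightarrow> nat \<Rightarrow> 'a dseq" where
  "insert_row x y m n = (\<lambda>i j. if i = m then
       (if j \<le> n then x i j else if j = Suc n then y else x i (j - 1))
     else x i j)"

definition insert_col :: "'a dseq \<Rightarrow> 'a \<Rightarrow> nat \<Rightarrow> nat \<Rightarrow> 'a dseq" where
  "insert_col x y m n = (\<lambda>i j. if j = n then
       (if i \<le> m then x i j else if i = Suc m then y else x (i - 1) j)
     else x i j)"

(* addition of finitely many terms: successive single insertions *)
inductive add_terms :: "'a dseq \<Rightarrow> 'a dseq \<Rightarrow> bool" where
  refl: "add_terms x x"
| row: "add_terms x z \<Longrightarrow> add_terms x (insert_row z y m n)"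
| col: "add_terms x z \<Longrightarrow> add_terms x (insert_col z y m n)"

definition conv_open :: "('a dseq \<Rightarrow> 'a \<Rightarrow> bool) \<Rightarrow> 'a set \<Rightarrow> bool" where
  "conv_open \<Omega> G \<longleftrightarrow> (\<forall>x l. \<Omega> x l \<and> (\<forall>i j. x i j \<in> - G) \<longrightarrow> l \<notin> G)"

definition pringsheim_conv :: "('a dseq \<Rightarrow> 'a \<Rightarrow> bool) \<Rightarrow> 'a dseq \<Rightarrow> 'a \<Rightarrow> bool" where
  "pringsheim_conv \<Omega> x \<xi> \<longleftrightarrow>
     (\<forall>U. conv_open \<Omega> U \<and> \<xi> \<in> U \<longrightarrow> (\<exists>k. \<forall>i j. i > k \<and> j > k \<longrightarrow> x i j \<in> U))"

end

theory Submission
  imports Defs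
begin

text \<open>Only condition (iv) is needed. If some open U \<ni> l missed terms x i j with
  arbitrarily large i, j, choosing one such term beyond every n gives, by (iv), a member
  of \<Omega> with limit l and all terms outside U, contradicting the openness of U.\<close>

lemma conv_open_meets_sequence:
  assumes "conv_open \<Omega> U" and "\<Omega> y l" and "l \<in> U"
  shows "\<exists>i j. y i j \<in> U"
  using assms unfolding conv_open_def by blast

lemma pringsheim_conv_if_diagonal_closed:
  assumes diagonal_closed: "\<And>x p ii jj. \<Omega> x p \<Longrightarrow> (\<forall>n. ii n > n \<and> jj n > n) \<Longrightarrow>
               \<Omega> (\<lambda>i j. x (ii i) (jj i)) p"
    and "\<Omega> x l"
  shows "pringsheim_conv \<Omega> x l"
  unfolding pringsheim_conv_def
proof (intro allI impI)
  fix U assume U: "conv_open \<Omega> U \<and> l \<in> U"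
  show "\<exists>k. \<forall>i j. i > k \<and> j > k \<longrightarrow> x i j \<in> U"
  proof (rule ccontr)
    assume "\<not> ?thesis"
    then have "\<forall>n. \<exists>i j. i > n \<and> j > n \<and> x i j \<notin> U" by blast
    then obtain ii where "\<forall>n. \<exists>j. ii n > n \<and> j > n \<and> x (ii n) j \<notin> U"
      by (rule choice[THEN exE])
    then obtain jj where escape: "\<forall>n. ii n > n \<and> jj n > n \<and> x (ii n) (jj n) \<notin> U"
      by (rule choice[THEN exE])
    have "\<Omega> (\<lambda>i j. x (ii i) (jj i)) l"
      using diagonal_closed[OF \<open>\<Omega> x l\<close>] escape by simp
    with U obtain i where "x (ii i) (jj i) \<in> U"
      using conv_open_meets_sequence[of \<Omega> U] by blast
    with escape show False by blast
  qed
qed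

theorem theorem3p4:
  fixes \<Omega> :: "'a dseq \<Rightarrow> 'a \<Rightarrow> bool"
  assumes i: "\<And>p. \<Omega> (\<lambda>i j. p) p"
    and ii: "\<And>x l z. \<Omega> x l \<Longrightarrow> add_terms x z \<Longrightarrow> \<Omega> z l"
    and iii: "\<And>A B x p. A \<noteq> {} \<Longrightarrow> B \<noteq> {} \<Longrightarrow> A \<inter> B = {} \<Longrightarrow>
               \<Omega> x p \<Longrightarrow> (\<forall>i j. x i j \<in> A \<union> B) \<Longrightarrow>
               \<exists>y. \<Omega> y p \<and> range (case_prod y) \<subseteq> range (case_prod x) \<and>
                   ((\<forall>i j. y i j \<in> A) \<or> (\<forall>i j. y i j \<in> B))"
    and iv: "\<And>x p ii jj. \<Omega> x p \<Longrightarrow> (\<forall>n. ii n > n \<and> jj n > n) \<Longrightarrow>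
               \<Omega> (\<lambda>i j. x (ii i) (jj i)) p"
  shows "\<forall>x l. \<Omega> x l \<longrightarrow> pringsheim_conv \<Omega> x l"
proof (intro allI impI)
  fix x l
  assume "\<Omega> x l"
  with iv show "pringsheim_conv \<Omega> x l"
    by (rule pringsheim_conv_if_diagonal_closed)
qed

end
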